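(* Let $M=r^2\phi^{-2}\partial_r$ on the expanding region $\mathcal{R}^+$ of Schwarzschild–de Sitter. Then for every (sufficiently regular) function $\psi$, $K^M[\psi]\le0$ everywhere on $\mathcal{R}^+$.
   Context: Fix $\Lambda>0$, $0<3m<1/\sqrt\Lambda$; $D(r)=\frac{\Lambda}{3}r^2-1+\frac{2m}{r}$, $r_{\mathcal{C}}$ its largest positive root; $\mathcal{R}^+=(r_{\mathcal{C}},\infty)_r\times\mathbb{R}_t\times\mathbb{S}^2$ with $g=-D^{-1}dr^2+Ddt^2+r^2\gamma_{\mathbb{S}^2}$; $\phi=D^{-1/2}$. $T_{\mu\nu}[\psi]=\partial_\mu\psi\partial_\nu\psi-\frac12g_{\mu\nu}g^{\alpha\beta}\partial_\alpha\psi\partial_\beta\psi$; for a vector field $X$, ${}^{(X)}\pi^{\mu\nu}=\frac12(\nabla^\mu X^\nu+\nabla^\nu X^\mu)$ and $K^X[\psi]={}^{(X)}\pi^{\mu\nu}T_{\mu\nu}[\psi]$. *)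

theory Defs
  imports "HOL-Analysis.Analysis"
begin

text \<open>Coordinates: a point is x :: nat => real with x 0 = r, x 1 = t,
  x 2 = theta, x 3 = varphi (polar coordinates on the sphere); indices range over {0..<4}.\<close>

definition sdsD :: "real \<Rightarrow> real \<Rightarrow> real \<Rightarrow> real" where
  "sdsD \<Lambda> m r = \<Lambda> / 3 * r^2 - 1 + 2 * m / r"

definition rC :: "real \<Rightarrow> real \<Rightarrow> real" where
  "rC \<Lambda> m = (GREATEST r. r > 0 \<and> sdsD \<Lambda> m r = 0)"

definition sdsphi :: "real \<Rightarrow> real \<Rightarrow> real \<Rightarrow> real" where
  "sdsphi \<Lambda> m r = 1 / sqrt (sdsD \<Lambda> m r)"

definition sds_g :: "real \<Rightarrow> real \<Rightarrow> (nat \<Rightarrow> real) \<Rightarrow> nat \<Rightarrow> nat \<Rightarrow> real" where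
  "sds_g \<Lambda> m x \<mu> \<nu> =
     (if \<mu> \<noteq> \<nu> then 0
      else if \<mu> = 0 then - 1 / sdsD \<Lambda> m (x 0)
      else if \<mu> = 1 then sdsD \<Lambda> m (x 0)
      else if \<mu> = 2 then (x 0)^2
      else if \<mu> = 3 then (x 0)^2 * (sin (x 2))^2
      else 0)"

definition sds_ginv :: "real \<Rightarrow> real \<Rightarrow> (nat \<Rightarrow> real) \<Rightarrow> nat \<Rightarrow> nat \<Rightarrow> real" where
  "sds_ginv \<Lambda> m x \<mu> \<nu> =
     (if \<mu> \<noteq> \<nu> then 0
      else if \<mu> = 0 then - sdsD \<Lambda> m (x 0)
      else if \<mu> = 1 then 1 / sdsD \<Lambda> m (x 0)
      else if \<mu> = 2 then 1 / (x 0)^2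
      else if \<mu> = 3 then 1 / ((x 0)^2 * (sin (x 2))^2)
      else 0)"

definition pd :: "((nat \<Rightarrow> real) \<Rightarrow> real) \<Rightarrow> (nat \<Rightarrow> real) \<Rightarrow> nat \<Rightarrow> real" where
  "pd f x \<mu> = deriv (\<lambda>s. f (x(\<mu> := s))) (x \<mu>)"

definition christoffel ::
  "((nat \<Rightarrow> real) \<Rightarrow> nat \<Rightarrow> nat \<Rightarrow> real) \<Rightarrow> ((nat \<Rightarrow> real) \<Rightarrow> nat \<Rightarrow> nat \<Rightarrow> real)
   \<Rightarrow> (nat \<Rightarrow> real) \<Rightarrow> nat \<Rightarrow> nat \<Rightarrow> nat \<Rightarrow> real" where
  "christoffel g ginv x la \<mu> \<nu> =
     (1/2) * (\<Sum>\<sigma><4. ginv x la \<sigma> *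
        (pd (\<lambda>y. g y \<sigma> \<nu>) x \<mu> + pd (\<lambda>y. g y \<sigma> \<mu>) x \<nu> - pd (\<lambda>y. g y \<mu> \<nu>) x \<sigma>))"

definition covd ::
  "((nat \<Rightarrow> real) \<Rightarrow> nat \<Rightarrow> nat \<Rightarrow> real) \<Rightarrow> ((nat \<Rightarrow> real) \<Rightarrow> nat \<Rightarrow> nat \<Rightarrow> real)
   \<Rightarrow> ((nat \<Rightarrow> real) \<Rightarrow> nat \<Rightarrow> real) \<Rightarrow> (nat \<Rightarrow> real) \<Rightarrow> nat \<Rightarrow> nat \<Rightarrow> real" where
  "covd g ginv X x \<mu> \<nu> =
     pd (\<lambda>y. X y \<nu>) x \<mu> + (\<Sum>la<4. christoffel g ginv x \<nu> \<mu> la * X x la)"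

definition deformation ::
  "((nat \<Rightarrow> real) \<Rightarrow> nat \<Rightarrow> nat \<Rightarrow> real) \<Rightarrow> ((nat \<Rightarrow> real) \<Rightarrow> nat \<Rightarrow> nat \<Rightarrow> real)
   \<Rightarrow> ((nat \<Rightarrow> real) \<Rightarrow> nat \<Rightarrow> real) \<Rightarrow> (nat \<Rightarrow> real) \<Rightarrow> nat \<Rightarrow> nat \<Rightarrow> real" where
  "deformation g ginv X x \<mu> \<nu> =
     (1/2) * ((\<Sum>\<alpha><4. ginv x \<mu> \<alpha> * covd g ginv X x \<alpha> \<nu>)
            + (\<Sum>\<alpha><4. ginv x \<nu> \<alpha> * covd g ginv X x \<alpha> \<mu>))"

definition stress ::
  "((nat \<Rightarrow> real) \<Rightarrow> nat \<Rightarrow> nat \<Rightarrow> real) \<Rightarrow> ((nat \<Rightarrow> real) \<Rightarrow> nat \<Rightarrow> nat \<Rightarrow> real)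
   \<Rightarrow> ((nat \<Rightarrow> real) \<Rightarrow> real) \<Rightarrow> (nat \<Rightarrow> real) \<Rightarrow> nat \<Rightarrow> nat \<Rightarrow> real" where
  "stress g ginv \<psi> x \<mu> \<nu> =
     pd \<psi> x \<mu> * pd \<psi> x \<nu>
     - (1/2) * g x \<mu> \<nu> * (\<Sum>\<alpha><4. \<Sum>\<beta><4. ginv x \<alpha> \<beta> * pd \<psi> x \<alpha> * pd \<psi> x \<beta>)"

definition Kcurrent ::
  "((nat \<Rightarrow> real) \<Rightarrow> nat \<Rightarrow> nat \<Rightarrow> real) \<Rightarrow> ((nat \<Rightarrow> real) \<Rightarrow> nat \<Rightarrow> nat \<Rightarrow> real)
   \<Rightarrow> ((nat \<Rightarrow> real) \<Rightarrow> nat \<Rightarrow> real) \<Rightarrow> ((nat \<Rightarrow> real) \<Rightarrow> real) \<Rightarrow> (nat \<Rightarrow> real) \<Rightarrow> real" where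
  "Kcurrent g ginv X \<psi> x =
     (\<Sum>\<mu><4. \<Sum>\<nu><4. deformation g ginv X x \<mu> \<nu> * stress g ginv \<psi> x \<mu> \<nu>)"

definition sdsM :: "real \<Rightarrow> real \<Rightarrow> (nat \<Rightarrow> real) \<Rightarrow> nat \<Rightarrow> real" where
  "sdsM \<Lambda> m x \<mu> = (if \<mu> = 0 then (x 0)^2 / (sdsphi \<Lambda> m (x 0))^2 else 0)"

end

theory Submission
  imports Defs "HOL-Real_Asymp.Real_Asymp" "HOL-Computational_Algebra.Polynomial"
begin

text \<open>
  In the coordinates (r, t, theta, varphi) the field is M = r^2 D d_r, and its deformation tensor is
  diagonal with entries -D (2 r D + r^2 D'/2), r^2 D' / (2 D), D / r and D / (r sin^2 theta).
  Contracting with the energy-momentum tensor, the (d_r psi)^2 terms cancel and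
  K^M = -2 r (d_t psi)^2 - (D/r + D'/2) ((d_theta psi)^2 + (d_varphi psi)^2 / sin^2 theta).
  Both coefficients have the right sign beyond the cosmological horizon: there D > 0 and
  r > 3m, because D(3m) = (9 Lambda m^2 - 1)/3 < 0 forces a root of D above 3m; hence
  r (D/r + D'/2) = 2 D + 1 - 3m/r > 0.
\<close>

lemma continuous_on_sdsD: "0 \<notin> S \<Longrightarrow> continuous_on S (sdsD L m)"
  unfolding sdsD_def[abs_def] by (intro continuous_intros) auto

lemma sdsD_tendsto_at_top: "L > 0 \<Longrightarrow> filterlim (sdsD L m) at_top at_top"
  unfolding sdsD_def by real_asymp

lemma sdsD_pos_beyond:
  assumes "L > 0"
  obtains R where "a \<le> R" "sdsD L m R > 0"
proof -
  have "eventually (\<lambda>R. a \<le> R \<and> 0 < sdsD L m R) at_top"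
    using eventually_ge_at_top sdsD_tendsto_at_top[OF assms]
    by (intro eventually_conj) (auto simp: filterlim_at_top_dense)
  then show ?thesis
    using that by (auto simp: eventually_at_top_linorder)
qed

lemma finite_sdsD_zeros: "finite {r. 0 < r \<and> sdsD L m r = 0}"
proof (rule finite_subset)
  show "{r. 0 < r \<and> sdsD L m r = 0} \<subseteq> {r. poly [:2*m, -1, 0, L/3:] r = 0}"
    by (auto simp: sdsD_def field_simps power2_eq_square power3_eq_cube)
  show "finite {r. poly [:2*m, -1, 0, L/3:] r = 0}"
    by (rule poly_roots_finite) simp
qed

lemma sdsD_zero_le_rC:
  assumes "0 < r" "sdsD L m r = 0"
  shows "r \<le> rC L m"
proof -
  let ?Z = "{r. 0 < r \<and> sdsD L m r = 0}"
  have "Max ?Z \<in> ?Z"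
    using assms by (intro Max_in finite_sdsD_zeros) auto
  then have "rC L m = Max ?Z"
    unfolding rC_def using finite_sdsD_zeros by (intro Greatest_equality) auto
  then show ?thesis
    using assms finite_sdsD_zeros by simp
qed

lemma sdsD_pos_above_rC:
  assumes "L > 0" "0 < r" "rC L m < r"
  shows "sdsD L m r > 0"
proof (rule ccontr)
  assume "\<not> sdsD L m r > 0"
  moreover obtain R where "r \<le> R" "sdsD L m R > 0"
    using sdsD_pos_beyond[OF \<open>L > 0\<close>] .
  moreover have "continuous_on {r..R} (sdsD L m)"
    using \<open>0 < r\<close> by (intro continuous_on_sdsD) auto
  ultimately obtain z where "r \<le> z" "sdsD L m z = 0"
    using IVT'[of "sdsD L m" r 0 R] by force
  then show False
    using sdsD_zero_le_rC[of z L m] assms by linarith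
qed

lemma sdsD_3m_neg:
  assumes "L > 0" "0 < m" "3 * m < 1 / sqrt L"
  shows "sdsD L m (3 * m) < 0"
proof -
  have "3 * m * sqrt L < 1"
    using assms by (simp add: field_simps)
  then have "(3 * m * sqrt L)^2 < 1"
    using assms by (simp add: power_less_one_iff abs_less_iff)
  moreover have "sdsD L m (3 * m) = ((3 * m * sqrt L)^2 - 1) / 3"
    using assms by (simp add: sdsD_def field_simps power2_eq_square)
  ultimately show ?thesis
    by simp
qed

lemma rC_gt_3m:
  assumes "L > 0" "0 < m" "3 * m < 1 / sqrt L"
  shows "3 * m < rC L m"
proof -
  obtain R where "3 * m \<le> R" "sdsD L m R > 0"
    using sdsD_pos_beyond[OF \<open>L > 0\<close>] .
  moreover have "continuous_on {3 * m..R} (sdsD L m)"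
    using \<open>0 < m\<close> by (intro continuous_on_sdsD) auto
  ultimately obtain z where "3 * m \<le> z" "sdsD L m z = 0"
    using IVT'[of "sdsD L m" "3 * m" 0 R] sdsD_3m_neg[OF assms] by force
  moreover have "z \<noteq> 3 * m"
    using sdsD_3m_neg[OF assms] \<open>sdsD L m z = 0\<close> by auto
  ultimately show ?thesis
    using sdsD_zero_le_rC[of z L m] \<open>0 < m\<close> by simp
qed

definition sdsD' :: "real \<Rightarrow> real \<Rightarrow> real \<Rightarrow> real" where
  "sdsD' L m r = 2 * L * r / 3 - 2 * m / r^2"

lemma has_real_derivative_sdsD:
  "r \<noteq> 0 \<Longrightarrow> (sdsD L m has_real_derivative sdsD' L m r) (at r)"
  unfolding sdsD_def[abs_def] sdsD'_def
  by (auto intro!: derivative_eq_intros simp: field_simps power2_eq_square)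

lemma sum_lessThan_4: "(\<Sum>i<4. f i) = f 0 + f 1 + f 2 + f (3::nat)"
  by (simp add: eval_nat_numeral)

lemma less_4_cases: "(i::nat) < 4 \<Longrightarrow> i = 0 \<or> i = 1 \<or> i = 2 \<or> i = 3"
  by auto

lemma pd_const: "(\<And>s. f (x(\<mu> := s)) = f x) \<Longrightarrow> pd f x \<mu> = 0"
  unfolding pd_def by simp

lemma pd_sds_g:
  assumes "x 0 \<noteq> 0" "sdsD L m (x 0) \<noteq> 0"
  shows "pd (\<lambda>y. sds_g L m y \<sigma> \<nu>) x \<mu> =
    (if \<sigma> \<noteq> \<nu> then 0
     else if \<mu> = 0 then
       (if \<sigma> = 0 then sdsD' L m (x 0) / (sdsD L m (x 0))^2
        else if \<sigma> = 1 then sdsD' L m (x 0)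
        else if \<sigma> = 2 then 2 * x 0
        else if \<sigma> = 3 then 2 * x 0 * (sin (x 2))^2 else 0)
     else if \<mu> = 2 \<and> \<sigma> = 3 then (x 0)^2 * (2 * sin (x 2) * cos (x 2))
     else 0)"
proof -
  consider "\<sigma> \<noteq> \<nu>" | "\<sigma> = \<nu>" "\<mu> = 0" | "\<sigma> = \<nu>" "\<mu> = 2" "\<sigma> = 3"
    | "\<sigma> = \<nu>" "\<mu> \<noteq> 0" "\<mu> = 2 \<longrightarrow> \<sigma> \<noteq> 3"
    by blast
  then show ?thesis
  proof cases
    case 2
    have D: "(sdsD L m has_real_derivative sdsD' L m (x 0)) (at (x 0))"
      using has_real_derivative_sdsD[OF assms(1)] .
    have "((\<lambda>s. - 1 / sdsD L m s) has_real_derivative sdsD' L m (x 0) / (sdsD L m (x 0))^2) (at (x 0))"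
      using D assms(2) by (auto intro!: derivative_eq_intros simp: field_simps power2_eq_square)
    moreover have "((\<lambda>s. s^2) has_real_derivative 2 * x 0) (at (x 0))"
      by (auto intro!: derivative_eq_intros)
    moreover have "((\<lambda>s. s^2 * (sin (x 2))^2) has_real_derivative 2 * x 0 * (sin (x 2))^2) (at (x 0))"
      by (auto intro!: derivative_eq_intros)
    ultimately show ?thesis
      using 2 D by (auto simp: pd_def sds_g_def DERIV_imp_deriv)
  next
    case 3
    have "((\<lambda>s. (x 0)^2 * (sin s)^2) has_real_derivative (x 0)^2 * (2 * sin (x 2) * cos (x 2))) (at (x 2))"
      by (auto intro!: derivative_eq_intros)
    then show ?thesis
      using 3 by (auto simp: pd_def sds_g_def DERIV_imp_deriv)
  qed (auto intro!: pd_const simp: sds_g_def)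
qed

lemma divide_sdsphi_square: "sdsD L m r > 0 \<Longrightarrow> a / (sdsphi L m r)^2 = a * sdsD L m r"
  unfolding sdsphi_def by (simp add: power_divide)

lemma pd_sdsM:
  assumes "x 0 \<noteq> 0" "sdsD L m (x 0) > 0"
  shows "pd (\<lambda>y. sdsM L m y \<nu>) x \<mu> =
    (if \<nu> = 0 \<and> \<mu> = 0 then 2 * x 0 * sdsD L m (x 0) + (x 0)^2 * sdsD' L m (x 0) else 0)"
proof (cases "\<nu> = 0 \<and> \<mu> = 0")
  case True
  have D: "(sdsD L m has_real_derivative sdsD' L m (x 0)) (at (x 0))"
    using has_real_derivative_sdsD[OF assms(1)] .
  have "eventually (\<lambda>s. sdsD L m s > 0) (nhds (x 0))"
    using DERIV_isCont[OF D] assms(2) by (simp add: isCont_def tendsto_at_iff_tendsto_nhds order_tendstoD)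
  then have ev: "eventually (\<lambda>s. s^2 * sdsD L m s = s^2 / (sdsphi L m s)^2) (nhds (x 0))"
    by eventually_elim (simp add: divide_sdsphi_square)
  have "((\<lambda>s. s^2 * sdsD L m s) has_real_derivative 2 * x 0 * sdsD L m (x 0) + (x 0)^2 * sdsD' L m (x 0)) (at (x 0))"
    using D by (auto intro!: derivative_eq_intros)
  then have "((\<lambda>s. s^2 / (sdsphi L m s)^2) has_real_derivative 2 * x 0 * sdsD L m (x 0) + (x 0)^2 * sdsD' L m (x 0)) (at (x 0))"
    using DERIV_cong_ev[OF refl ev refl] by simp
  then show ?thesis
    using True by (simp add: pd_def sdsM_def DERIV_imp_deriv)
next
  case False
  then show ?thesis by (subst pd_const) (auto simp: sdsM_def)
qed

lemma christoffel_sds_0: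
  assumes "x 0 \<noteq> 0" "sdsD L m (x 0) \<noteq> 0" "sin (x 2) \<noteq> 0" "\<alpha> < 4" "\<nu> < 4"
  shows "christoffel (sds_g L m) (sds_ginv L m) x \<nu> \<alpha> 0 =
    (if \<alpha> \<noteq> \<nu> then 0
     else if \<nu> = 0 then - sdsD' L m (x 0) / (2 * sdsD L m (x 0))
     else if \<nu> = 1 then sdsD' L m (x 0) / (2 * sdsD L m (x 0))
     else 1 / x 0)"
  using less_4_cases[OF assms(4)] less_4_cases[OF assms(5)]
  unfolding christoffel_def sum_lessThan_4 pd_sds_g[of x L m, OF assms(1,2)]
  by (elim disjE) (simp_all add: sds_ginv_def assms(1-3) field_simps power2_eq_square)

lemma covd_sdsM:
  assumes "x 0 \<noteq> 0" "sdsD L m (x 0) > 0" "sin (x 2) \<noteq> 0" "\<alpha> < 4" "\<nu> < 4"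
  shows "covd (sds_g L m) (sds_ginv L m) (sdsM L m) x \<alpha> \<nu> =
    (if \<alpha> \<noteq> \<nu> then 0
     else if \<alpha> = 0 then 2 * x 0 * sdsD L m (x 0) + (x 0)^2 * sdsD' L m (x 0) / 2
     else if \<alpha> = 1 then (x 0)^2 * sdsD' L m (x 0) / 2
     else x 0 * sdsD L m (x 0))"
proof -
  have "sdsD L m (x 0) \<noteq> 0"
    using assms(2) by simp
  have "covd (sds_g L m) (sds_ginv L m) (sdsM L m) x \<alpha> \<nu> =
      pd (\<lambda>y. sdsM L m y \<nu>) x \<alpha>
      + christoffel (sds_g L m) (sds_ginv L m) x \<nu> \<alpha> 0 * ((x 0)^2 * sdsD L m (x 0))"
    unfolding covd_def sum_lessThan_4 using assms(2) by (simp add: sdsM_def divide_sdsphi_square)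
  then show ?thesis
    using less_4_cases[OF assms(4)] less_4_cases[OF assms(5)] assms(1-3)
    unfolding pd_sdsM[of x L m, OF assms(1,2)]
      christoffel_sds_0[of x L m, OF assms(1) \<open>sdsD L m (x 0) \<noteq> 0\<close> assms(3-5)]
    by (elim disjE) (simp_all add: field_simps power2_eq_square)
qed

lemma deformation_sdsM:
  assumes "x 0 \<noteq> 0" "sdsD L m (x 0) > 0" "sin (x 2) \<noteq> 0" "\<mu> < 4" "\<nu> < 4"
  shows "deformation (sds_g L m) (sds_ginv L m) (sdsM L m) x \<mu> \<nu> =
    (if \<mu> \<noteq> \<nu> then 0
     else if \<mu> = 0 then - sdsD L m (x 0) * (2 * x 0 * sdsD L m (x 0) + (x 0)^2 * sdsD' L m (x 0) / 2)
     else if \<mu> = 1 then (x 0)^2 * sdsD' L m (x 0) / (2 * sdsD L m (x 0))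
     else if \<mu> = 2 then sdsD L m (x 0) / x 0
     else sdsD L m (x 0) / (x 0 * (sin (x 2))^2))"
  using less_4_cases[OF assms(4)] less_4_cases[OF assms(5)] assms(1-3)
  unfolding deformation_def sum_lessThan_4
  by (elim disjE) (simp_all add: covd_sdsM[OF assms(1-3)] sds_ginv_def field_simps power2_eq_square)

lemma Kcurrent_sdsM:
  assumes "x 0 \<noteq> 0" "sdsD L m (x 0) > 0" "sin (x 2) \<noteq> 0"
  shows "Kcurrent (sds_g L m) (sds_ginv L m) (sdsM L m) \<psi> x =
    - 2 * x 0 * (pd \<psi> x 1)^2 - (sdsD L m (x 0) / x 0 + sdsD' L m (x 0) / 2) *
       ((pd \<psi> x 2)^2 + (pd \<psi> x 3)^2 / (sin (x 2))^2)"
  using assms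
  unfolding Kcurrent_def sum_lessThan_4 stress_def
  by (simp add: deformation_sdsM[OF assms] sds_g_def sds_ginv_def field_simps power2_eq_square)

lemma sdsD_div_add_half_sdsD'_pos:
  assumes "3 * m < r" "0 < r" "0 < sdsD L m r"
  shows "0 < sdsD L m r / r + sdsD' L m r / 2"
proof -
  have "sdsD L m r / r + sdsD' L m r / 2 = (2 * sdsD L m r + (1 - 3 * m / r)) / r"
    using assms(2) by (simp add: sdsD_def sdsD'_def field_simps power2_eq_square)
  moreover have "3 * m / r < 1"
    using assms(1,2) by simp
  then have "0 < 2 * sdsD L m r + (1 - 3 * m / r)"
    using assms(3) by linarith
  ultimately show ?thesis
    using assms(2) by simp
qed

theorem proposition3p4:
  fixes \<Lambda> m :: real and \<psi> :: "(nat \<Rightarrow> real) \<Rightarrow> real" and x :: "nat \<Rightarrow> real"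
  assumes "\<Lambda> > 0" and "0 < 3 * m" and "3 * m < 1 / sqrt \<Lambda>"
    and "\<forall>y \<mu>. (\<lambda>s. \<psi> (y(\<mu> := s))) differentiable (at (y \<mu>))"
    and "x 0 > rC \<Lambda> m" and "0 < x 2" and "x 2 < pi"
  shows "Kcurrent (sds_g \<Lambda> m) (sds_ginv \<Lambda> m) (sdsM \<Lambda> m) \<psi> x \<le> 0"
proof -
  have "3 * m < x 0"
    using rC_gt_3m[of \<Lambda> m] assms(1-3,5) by simp
  then have r: "0 < x 0"
    using assms(2) by simp
  have D: "0 < sdsD \<Lambda> m (x 0)"
    using sdsD_pos_above_rC[OF assms(1) r assms(5)] .
  have "0 < sin (x 2)"
    using sin_gt_zero assms(6,7) by simp
  then have K: "Kcurrent (sds_g \<Lambda> m) (sds_ginv \<Lambda> m) (sdsM \<Lambda> m) \<psi> x =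
      - 2 * x 0 * (pd \<psi> x 1)^2 - (sdsD \<Lambda> m (x 0) / x 0 + sdsD' \<Lambda> m (x 0) / 2) *
        ((pd \<psi> x 2)^2 + (pd \<psi> x 3)^2 / (sin (x 2))^2)"
    using Kcurrent_sdsM r D by simp
  have "0 \<le> (sdsD \<Lambda> m (x 0) / x 0 + sdsD' \<Lambda> m (x 0) / 2) *
      ((pd \<psi> x 2)^2 + (pd \<psi> x 3)^2 / (sin (x 2))^2)"
    using sdsD_div_add_half_sdsD'_pos[OF \<open>3 * m < x 0\<close> r D] by simp
  moreover have "0 \<le> 2 * x 0 * (pd \<psi> x 1)^2"
    using r by simp
  ultimately show ?thesis
    unfolding K by linarith
qed

end
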